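(* Let $\mathcal D=\{(x_i,a_i^w,a_i^l)\}_{i=1}^n$ be a finite set of preference pairs ($a_i^w$ preferred to $a_i^l$) and $\Gamma:\mathcal X\times\mathcal A\to\mathbb R$ any function. For a policy $\pi$ with $\pi(a|x)>0$ for all $(x,a)$ define $$\mathcal L(\pi)=\sum_{i=1}^n\log\sigma\Big(\eta\log\frac{\pi(a_i^w|x_i)}{\pi_0(a_i^w|x_i)}-\eta\log\frac{\pi(a_i^l|x_i)}{\pi_0(a_i^l|x_i)}+\Gamma(x_i,a_i^w)-\Gamma(x_i,a_i^l)\Big),$$ and for a function $r:\mathcal X\times\mathcal A\to\mathbb R$ define $\ell(r)=\sum_{i=1}^n\log\sigma(r(x_i,a_i^w)-r(x_i,a_i^l))$. Then: (a) a full-support policy $\pi$ maximizes $\mathcal L$ over all full-support policies if and only if $r_\pi(x,a):=\eta\log\frac{\pi(a|x)}{\pi_0(a|x)}+\Gamma(x,a)$ maximizes $\ell$ over all functions $r$; (b) if $r^\dagger$ maximizes $\ell$ over all functions $r$, then the policy $\hat\pi(a|x)\propto\pi_0(a|x)\exp\big((r^\dagger(x,a)-\Gamma(x,a))/\eta\big)$ (i.e. the maximizer of $\mathbb E_{x,a\sim\pi}[r^\dagger(x,a)-\Gamma(x,a)]-\eta\,\mathbb E_x\mathrm{KL}(\pi(\cdot|x)\|\pi_0(\cdot|x))$) maximizes $\mathcal L$.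
   Context: $\mathcal X$ prompts, $\mathcal A$ a finite set of responses; $\pi_0$ a reference policy with $\pi_0(a|x)>0$ for all $(x,a)$; $\eta>0$; $\sigma(z)=1/(1+e^{-z})$. *)

theory Defs
  imports Complex_Main
begin

definition sigmoid :: "real \<Rightarrow> real" where
  "sigmoid z = 1 / (1 + exp (- z))"

definition full_support_policy :: "('x \<Rightarrow> 'a::finite \<Rightarrow> real) \<Rightarrow> bool" where
  "full_support_policy p \<longleftrightarrow> (\<forall>x a. p x a > 0) \<and> (\<forall>x. (\<Sum>a\<in>UNIV. p x a) = 1)"

definition L_obj :: "real \<Rightarrow> ('x \<Rightarrow> 'a \<Rightarrow> real) \<Rightarrow> ('x \<Rightarrow> 'a \<Rightarrow> real)
    \<Rightarrow> ('x \<times> 'a \<times> 'a) list \<Rightarrow> ('x \<Rightarrow> 'a \<Rightarrow> real) \<Rightarrow> real" where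
  "L_obj eta p0 Gamma D p =
     (\<Sum>(x, aw, al)\<leftarrow>D. ln (sigmoid (eta * ln (p x aw / p0 x aw) - eta * ln (p x al / p0 x al)
                                      + Gamma x aw - Gamma x al)))"

definition ell :: "('x \<times> 'a \<times> 'a) list \<Rightarrow> ('x \<Rightarrow> 'a \<Rightarrow> real) \<Rightarrow> real" where
  "ell D r = (\<Sum>(x, aw, al)\<leftarrow>D. ln (sigmoid (r x aw - r x al)))"

definition r_pol :: "real \<Rightarrow> ('x \<Rightarrow> 'a \<Rightarrow> real) \<Rightarrow> ('x \<Rightarrow> 'a \<Rightarrow> real)
    \<Rightarrow> ('x \<Rightarrow> 'a \<Rightarrow> real) \<Rightarrow> 'x \<Rightarrow> 'a \<Rightarrow> real" where
  "r_pol eta p0 Gamma p x a = eta * ln (p x a / p0 x a) + Gamma x a"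

definition pi_hat :: "real \<Rightarrow> ('x \<Rightarrow> 'a::finite \<Rightarrow> real) \<Rightarrow> ('x \<Rightarrow> 'a \<Rightarrow> real)
    \<Rightarrow> ('x \<Rightarrow> 'a \<Rightarrow> real) \<Rightarrow> 'x \<Rightarrow> 'a \<Rightarrow> real" where
  "pi_hat eta p0 Gamma r x a =
     p0 x a * exp ((r x a - Gamma x a) / eta) /
     (\<Sum>b\<in>UNIV. p0 x b * exp ((r x b - Gamma x b) / eta))"

end

theory Submission
  imports Defs
begin

text \<open>L(p) = ell(r_pol p). Every reward is, up to a prompt-dependent constant (to which ell is
  blind, since it only sees reward differences at a common prompt), the implicit reward of
  the Gibbs policy pi_hat; so the values of L over full-support policies are exactly the
  values of ell over all rewards, and maximizers correspond.\<close>

lemma L_obj_eq_ell_r_pol: "L_obj eta p0 Gamma D p = ell D (r_pol eta p0 Gamma p)"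
  unfolding L_obj_def ell_def r_pol_def
  by (rule arg_cong[where f=sum_list], rule map_cong) (auto simp: algebra_simps)

lemma ell_shift_prompt: "ell D (\<lambda>x a. r x a - c x) = ell D r"
  unfolding ell_def
  by (rule arg_cong[where f=sum_list], rule map_cong) (auto simp: algebra_simps)

lemma gibbs_normalizer_pos:
  fixes p0 :: "'x \<Rightarrow> 'a::finite \<Rightarrow> real"
  assumes "\<And>a. p0 x a > 0"
  shows "(\<Sum>b\<in>UNIV. p0 x b * exp ((r x b - Gamma x b) / eta)) > 0"
  using assms by (intro sum_pos) auto

lemma full_support_policy_pi_hat:
  fixes p0 :: "'x \<Rightarrow> 'a::finite \<Rightarrow> real"
  assumes "\<And>x a. p0 x a > 0"
  shows "full_support_policy (pi_hat eta p0 Gamma r)"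
  unfolding full_support_policy_def pi_hat_def
proof (intro conjI allI)
  fix x a
  show "0 < p0 x a * exp ((r x a - Gamma x a) / eta) /
        (\<Sum>b\<in>UNIV. p0 x b * exp ((r x b - Gamma x b) / eta))"
    using gibbs_normalizer_pos[of p0 x r Gamma eta] assms by simp
next
  fix x
  show "(\<Sum>a\<in>UNIV. p0 x a * exp ((r x a - Gamma x a) / eta) /
        (\<Sum>b\<in>UNIV. p0 x b * exp ((r x b - Gamma x b) / eta))) = 1"
    using gibbs_normalizer_pos[of p0 x r Gamma eta] assms
    by (simp add: sum_divide_distrib[symmetric])
qed

lemma r_pol_pi_hat:
  fixes p0 :: "'x \<Rightarrow> 'a::finite \<Rightarrow> real"
  assumes p0_pos: "\<And>x a. p0 x a > 0" and "eta \<noteq> 0"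
  shows "r_pol eta p0 Gamma (pi_hat eta p0 Gamma r) =
    (\<lambda>x a. r x a - eta * ln (\<Sum>b\<in>UNIV. p0 x b * exp ((r x b - Gamma x b) / eta)))"
proof (intro ext)
  fix x a
  define Z where "Z = (\<Sum>b\<in>UNIV. p0 x b * exp ((r x b - Gamma x b) / eta))"
  have "Z > 0"
    unfolding Z_def using p0_pos by (rule gibbs_normalizer_pos)
  have "pi_hat eta p0 Gamma r x a / p0 x a = exp ((r x a - Gamma x a) / eta) / Z"
    unfolding pi_hat_def Z_def[symmetric] using p0_pos[of x a] by simp
  then have "ln (pi_hat eta p0 Gamma r x a / p0 x a) = (r x a - Gamma x a) / eta - ln Z"
    using \<open>Z > 0\<close> by (simp add: ln_div)
  then show "r_pol eta p0 Gamma (pi_hat eta p0 Gamma r) x a = r x a - eta * ln Z"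
    unfolding r_pol_def using \<open>eta \<noteq> 0\<close> by (simp add: field_simps)
qed

lemma L_obj_pi_hat:
  fixes p0 :: "'x \<Rightarrow> 'a::finite \<Rightarrow> real"
  assumes "\<And>x a. p0 x a > 0" and "eta \<noteq> 0"
  shows "L_obj eta p0 Gamma D (pi_hat eta p0 Gamma r) = ell D r"
  unfolding L_obj_eq_ell_r_pol r_pol_pi_hat[OF assms] by (rule ell_shift_prompt)

theorem proposition1:
  fixes eta :: real
    and p0 :: "'x \<Rightarrow> 'a::finite \<Rightarrow> real"
    and Gamma :: "'x \<Rightarrow> 'a \<Rightarrow> real"
    and D :: "('x \<times> 'a \<times> 'a) list"
  assumes eta_pos: "eta > 0"
    and p0: "full_support_policy p0"
  shows "(\<forall>p. full_support_policy p \<longrightarrow>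
            ((\<forall>p'. full_support_policy p' \<longrightarrow> L_obj eta p0 Gamma D p' \<le> L_obj eta p0 Gamma D p)
             \<longleftrightarrow> (\<forall>r. ell D r \<le> ell D (r_pol eta p0 Gamma p))))
       \<and> (\<forall>rd. (\<forall>r. ell D r \<le> ell D rd) \<longrightarrow>
            full_support_policy (pi_hat eta p0 Gamma rd) \<and>
            (\<forall>p'. full_support_policy p' \<longrightarrow>
               L_obj eta p0 Gamma D p' \<le> L_obj eta p0 Gamma D (pi_hat eta p0 Gamma rd)))"
proof -
  have p0_pos: "\<And>x a. p0 x a > 0"
    using p0 unfolding full_support_policy_def by blast
  have eta: "eta \<noteq> 0" using eta_pos by simp
  have pi_hat_policy: "full_support_policy (pi_hat eta p0 Gamma r)" for r
    using p0_pos by (rule full_support_policy_pi_hat)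
  have L_bounded_iff: "(\<forall>p'. full_support_policy p' \<longrightarrow> L_obj eta p0 Gamma D p' \<le> v)
      \<longleftrightarrow> (\<forall>r. ell D r \<le> v)" for v
  proof
    assume L_bounded: "\<forall>p'. full_support_policy p' \<longrightarrow> L_obj eta p0 Gamma D p' \<le> v"
    show "\<forall>r. ell D r \<le> v"
    proof
      fix r
      have "ell D r = L_obj eta p0 Gamma D (pi_hat eta p0 Gamma r)"
        using p0_pos eta by (rule L_obj_pi_hat[symmetric])
      also have "\<dots> \<le> v"
        using L_bounded pi_hat_policy by blast
      finally show "ell D r \<le> v" .
    qed
  qed (simp add: L_obj_eq_ell_r_pol)
  show ?thesis
    unfolding L_bounded_iff
    using L_obj_pi_hat[of p0, OF p0_pos eta]
    by (simp add: L_obj_eq_ell_r_pol[symmetric] pi_hat_policy)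
qed

end
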